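(* In the setting described in the context, for every $t\ge0$: if $R_{t\infty}>0$ then $L_{t\infty}=\infty$, whereas if $L_{t\infty}<\infty$ then $R_{t\infty}=0$.
   Context: Let $(\Omega,\mathcal F,\mathbb P)$ be a probability space with a filtration $\{\mathcal F_t\}_{t\ge0}$ satisfying the usual conditions; (in)equalities between random variables hold a.s. A pricing kernel is an $\{\mathcal F_t\}$-adapted càdlàg semimartingale $\{\pi_t\}_{t\ge0}$ with (a) $\pi_t>0$, (b) $\mathbb E[\pi_t]<\infty$ for all $t\ge0$, (c) $\liminf_{t\to\infty}\mathbb E[\pi_t]=0$. Fix such a pricing kernel and set $P_{tT}=\pi_t^{-1}\mathbb E[\pi_T\mid\mathcal F_t]$ for $0\le t<T$. Define the exponential rate $R_{tT}=-(T-t)^{-1}\ln P_{tT}$ and the Libor rate $L_{tT}=(T-t)^{-1}(P_{tT}^{-1}-1)$. For a family $\{A_x\}_{x\in\mathbb R^+}$ of $\mathcal F_t$-measurable extended-real random variables, $\limsup_{x\to\infty}A_x:=\operatorname{ess\,inf}_{x}\operatorname{ess\,sup}_{y\ge x}A_y$, with essential supremum/infimum taken among $\mathcal F_t$-measurable random variables. The long exponential rate is $R_{t\infty}=\limsup_{T\to\infty}R_{tT}$ and the long Libor rate is $L_{t\infty}=\limsup_{T\to\infty}L_{tT}$. *)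

theory Defs
  imports "HOL-Probability.Probability"
begin

definition usual_filtration :: "'a measure \<Rightarrow> (real \<Rightarrow> 'a measure) \<Rightarrow> bool" where
  "usual_filtration M F \<longleftrightarrow>
     (\<forall>t. subalgebra M (F t)) \<and>
     (\<forall>s t. 0 \<le> s \<and> s \<le> t \<longrightarrow> sets (F s) \<subseteq> sets (F t)) \<and>
     (\<forall>t\<ge>0. sets (F t) = (\<Inter>s\<in>{t<..}. sets (F s))) \<and>
     (\<forall>N\<in>null_sets M. \<forall>A. A \<subseteq> N \<longrightarrow> A \<in> sets (F 0))"

definition adapted :: "(real \<Rightarrow> 'a measure) \<Rightarrow> (real \<Rightarrow> 'a \<Rightarrow> real) \<Rightarrow> bool" where
  "adapted F X \<longleftrightarrow> (\<forall>t\<ge>0. X t \<in> borel_measurable (F t))"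

definition cadlag :: "(real \<Rightarrow> real) \<Rightarrow> bool" where
  "cadlag f \<longleftrightarrow> (\<forall>t\<ge>0. continuous (at_right t) f \<and> (t > 0 \<longrightarrow> (\<exists>l. (f \<longlongrightarrow> l) (at_left t))))"

definition cadlag_process :: "'a measure \<Rightarrow> (real \<Rightarrow> 'a \<Rightarrow> real) \<Rightarrow> bool" where
  "cadlag_process M X \<longleftrightarrow> (\<forall>\<omega>\<in>space M. cadlag (\<lambda>t. X t \<omega>))"

definition martingale :: "'a measure \<Rightarrow> (real \<Rightarrow> 'a measure) \<Rightarrow> (real \<Rightarrow> 'a \<Rightarrow> real) \<Rightarrow> bool" where
  "martingale M F X \<longleftrightarrow> adapted F X \<and> (\<forall>t\<ge>0. integrable M (X t)) \<and>
     (\<forall>s t. 0 \<le> s \<and> s \<le> t \<longrightarrow> (AE \<omega> in M. real_cond_exp M (F s) (X t) \<omega> = X s \<omega>))"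

definition stopping_time_ereal :: "'a measure \<Rightarrow> (real \<Rightarrow> 'a measure) \<Rightarrow> ('a \<Rightarrow> ereal) \<Rightarrow> bool" where
  "stopping_time_ereal M F \<tau> \<longleftrightarrow> (\<forall>\<omega>\<in>space M. 0 \<le> \<tau> \<omega>) \<and>
     (\<forall>t\<ge>0. {\<omega>\<in>space M. \<tau> \<omega> \<le> ereal t} \<in> sets (F t))"

definition stopped :: "(real \<Rightarrow> 'a \<Rightarrow> real) \<Rightarrow> ('a \<Rightarrow> ereal) \<Rightarrow> real \<Rightarrow> 'a \<Rightarrow> real" where
  "stopped X \<tau> t \<omega> = X (real_of_ereal (min (ereal t) (\<tau> \<omega>))) \<omega>"

definition local_martingale :: "'a measure \<Rightarrow> (real \<Rightarrow> 'a measure) \<Rightarrow> (real \<Rightarrow> 'a \<Rightarrow> real) \<Rightarrow> bool" where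
  "local_martingale M F X \<longleftrightarrow> adapted F X \<and> cadlag_process M X \<and>
     (\<exists>\<tau> :: nat \<Rightarrow> 'a \<Rightarrow> ereal.
        (\<forall>n. stopping_time_ereal M F (\<tau> n)) \<and>
        (\<forall>n. \<forall>\<omega>\<in>space M. \<tau> n \<omega> \<le> \<tau> (Suc n) \<omega>) \<and>
        (AE \<omega> in M. (\<lambda>n. \<tau> n \<omega>) \<longlonglongrightarrow> \<infinity>) \<and>
        (\<forall>n. martingale M F (stopped X (\<tau> n))))"

definition finite_variation :: "(real \<Rightarrow> real) \<Rightarrow> bool" where
  "finite_variation f \<longleftrightarrow> (\<forall>T\<ge>0. \<exists>B. \<forall>(s::nat \<Rightarrow> real) n.
      (\<forall>i\<le>n. 0 \<le> s i \<and> s i \<le> T) \<and> (\<forall>i<n. s i \<le> s (Suc i)) \<longrightarrow>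
      (\<Sum>i<n. \<bar>f (s (Suc i)) - f (s i)\<bar>) \<le> B)"

definition semimartingale :: "'a measure \<Rightarrow> (real \<Rightarrow> 'a measure) \<Rightarrow> (real \<Rightarrow> 'a \<Rightarrow> real) \<Rightarrow> bool" where
  "semimartingale M F X \<longleftrightarrow> adapted F X \<and>
     (\<exists>N A. local_martingale M F N \<and> (\<forall>\<omega>\<in>space M. N 0 \<omega> = 0) \<and>
        adapted F A \<and> cadlag_process M A \<and> (\<forall>\<omega>\<in>space M. finite_variation (\<lambda>t. A t \<omega>)) \<and>
        (\<forall>\<omega>\<in>space M. A 0 \<omega> = 0) \<and>
        (\<forall>t\<ge>0. \<forall>\<omega>\<in>space M. X t \<omega> = X 0 \<omega> + N t \<omega> + A t \<omega>))"

definition pricing_kernel :: "'a measure \<Rightarrow> (real \<Rightarrow> 'a measure) \<Rightarrow> (real \<Rightarrow> 'a \<Rightarrow> real) \<Rightarrow> bool" where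
  "pricing_kernel M F \<pi> \<longleftrightarrow> adapted F \<pi> \<and> cadlag_process M \<pi> \<and> semimartingale M F \<pi> \<and>
     (\<forall>t\<ge>0. AE \<omega> in M. \<pi> t \<omega> > 0) \<and>
     (\<forall>t\<ge>0. integrable M (\<pi> t)) \<and>
     Liminf at_top (\<lambda>t. ereal (integral\<^sup>L M (\<pi> t))) = 0"

definition bond_price :: "'a measure \<Rightarrow> (real \<Rightarrow> 'a measure) \<Rightarrow> (real \<Rightarrow> 'a \<Rightarrow> real) \<Rightarrow> real \<Rightarrow> real \<Rightarrow> 'a \<Rightarrow> real" where
  "bond_price M F \<pi> t T \<omega> = real_cond_exp M (F t) (\<pi> T) \<omega> / \<pi> t \<omega>"

definition exp_rate :: "'a measure \<Rightarrow> (real \<Rightarrow> 'a measure) \<Rightarrow> (real \<Rightarrow> 'a \<Rightarrow> real) \<Rightarrow> real \<Rightarrow> real \<Rightarrow> 'a \<Rightarrow> real" where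
  "exp_rate M F \<pi> t T \<omega> = - ln (bond_price M F \<pi> t T \<omega>) / (T - t)"

definition libor_rate :: "'a measure \<Rightarrow> (real \<Rightarrow> 'a measure) \<Rightarrow> (real \<Rightarrow> 'a \<Rightarrow> real) \<Rightarrow> real \<Rightarrow> real \<Rightarrow> 'a \<Rightarrow> real" where
  "libor_rate M F \<pi> t T \<omega> = (1 / bond_price M F \<pi> t T \<omega> - 1) / (T - t)"

definition is_ess_sup :: "'a measure \<Rightarrow> 'a measure \<Rightarrow> 'i set \<Rightarrow> ('i \<Rightarrow> 'a \<Rightarrow> ereal) \<Rightarrow> ('a \<Rightarrow> ereal) \<Rightarrow> bool" where
  "is_ess_sup M G I A Z \<longleftrightarrow> Z \<in> borel_measurable G \<and>
     (\<forall>y\<in>I. AE \<omega> in M. A y \<omega> \<le> Z \<omega>) \<and>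
     (\<forall>W\<in>borel_measurable G. (\<forall>y\<in>I. AE \<omega> in M. A y \<omega> \<le> W \<omega>) \<longrightarrow> (AE \<omega> in M. Z \<omega> \<le> W \<omega>))"

definition is_ess_inf :: "'a measure \<Rightarrow> 'a measure \<Rightarrow> 'i set \<Rightarrow> ('i \<Rightarrow> 'a \<Rightarrow> ereal) \<Rightarrow> ('a \<Rightarrow> ereal) \<Rightarrow> bool" where
  "is_ess_inf M G I A Z \<longleftrightarrow> Z \<in> borel_measurable G \<and>
     (\<forall>y\<in>I. AE \<omega> in M. Z \<omega> \<le> A y \<omega>) \<and>
     (\<forall>W\<in>borel_measurable G. (\<forall>y\<in>I. AE \<omega> in M. W \<omega> \<le> A y \<omega>) \<longrightarrow> (AE \<omega> in M. W \<omega> \<le> Z \<omega>))"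

definition is_ess_limsup :: "'a measure \<Rightarrow> 'a measure \<Rightarrow> real set \<Rightarrow> (real \<Rightarrow> 'a \<Rightarrow> ereal) \<Rightarrow> ('a \<Rightarrow> ereal) \<Rightarrow> bool" where
  "is_ess_limsup M G I A Z \<longleftrightarrow> (\<exists>S. (\<forall>x\<in>{0..}. is_ess_sup M G {y\<in>I. x \<le> y} A (S x)) \<and>
      is_ess_inf M G {0..} S Z)"

end

theory Submission
  imports Defs "HOL-Real_Asymp.Real_Asymp"
begin

text \<open>
  Fix \<open>t\<close> and write \<open>S\<^sup>R x\<close>, \<open>S\<^sup>L x\<close> for the essential suprema of \<open>R\<^sub>t\<^sub>T\<close>, \<open>L\<^sub>t\<^sub>T\<close> over \<open>T \<ge> x\<close>.
  First, \<open>S\<^sup>R x \<ge> 0\<close>: on the \<open>\<F>\<^sub>t\<close>-set \<open>A\<close> where it is negative we have \<open>P\<^sub>t\<^sub>T > 1\<close> for all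
  large \<open>T\<close>, hence \<open>\<bbbE>[\<pi>\<^sub>T] \<ge> \<bbbE>[\<pi>\<^sub>t 1\<^sub>A] > 0\<close>, contradicting \<open>liminf \<bbbE>[\<pi>\<^sub>T] = 0\<close>.
  Second, where \<open>S\<^sup>L x \<le> a < \<infinity>\<close>, the inequality
  \<open>-ln P\<^sub>t\<^sub>T \<le> ln (1 + a (T - t)) \<le> ln (1 + a) + 2 \<surd>(T - t)\<close> gives
  \<open>R\<^sub>t\<^sub>T \<le> ln (1 + a) / d + 2 / \<surd>d\<close> whenever \<open>T - t \<ge> d\<close>, so \<open>R\<^sub>t\<^sub>\<infinity> \<le> 0\<close> there.
  Finally \<open>L\<^sub>t\<^sub>\<infinity> < \<infinity>\<close> forces \<open>S\<^sup>L n < \<infinity>\<close> for some \<open>n \<in> \<nat>\<close>, because the tails decrease.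
\<close>

lemma ln_one_plus_le_two_sqrt:
  fixes u :: real
  assumes "0 \<le> u"
  shows "ln (1 + u) \<le> 2 * sqrt u"
proof -
  have "ln (1 + u) \<le> ln ((1 + sqrt u)\<^sup>2)"
    using assms by (intro ln_mono) (auto simp: power2_eq_square algebra_simps)
  also have "\<dots> = 2 * ln (1 + sqrt u)"
    by (simp add: ln_realpow)
  also have "\<dots> \<le> 2 * sqrt u"
    using ln_add_one_self_le_self[of "sqrt u"] assms by simp
  finally show ?thesis .
qed

lemma exponential_rate_le_of_libor_rate_le:
  fixes P u d a :: real
  assumes "0 < P" "0 < d" "d \<le> u" "0 \<le> a" "(1 / P - 1) / u \<le> a"
  shows "- ln P / u \<le> ln (1 + a) / d + 2 / sqrt d"
proof (cases "ln P \<ge> 0")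
  case True
  then have "- ln P / u \<le> 0"
    using assms by (intro divide_nonpos_pos) auto
  moreover have "0 \<le> ln (1 + a) / d + 2 / sqrt d"
    using assms by (intro add_nonneg_nonneg divide_nonneg_pos) auto
  ultimately show ?thesis by linarith
next
  case False
  have u: "0 < u" using assms by simp
  have "- ln P = ln (1 / P)"
    using assms by (simp add: ln_div)
  also have "\<dots> \<le> ln ((1 + a) * (1 + u))"
  proof (rule ln_mono)
    have "1 / P \<le> 1 + a * u"
      using assms u by (simp add: field_simps)
    also have "\<dots> \<le> (1 + a) * (1 + u)"
      using assms by (simp add: algebra_simps)
    finally show "1 / P \<le> (1 + a) * (1 + u)" .
  qed (use assms in auto)
  also have "\<dots> \<le> ln (1 + a) + 2 * sqrt u"
    using assms u ln_one_plus_le_two_sqrt[of u] by (simp add: ln_mult)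
  finally have "- ln P / u \<le> (ln (1 + a) + 2 * sqrt u) / u"
    using u by (intro divide_right_mono) auto
  also have "\<dots> = ln (1 + a) / u + 2 / sqrt u"
    using u by (simp add: field_simps)
  also have "\<dots> \<le> ln (1 + a) / d + 2 / sqrt d"
    using assms by (intro add_mono divide_left_mono) (auto intro!: frac_le)
  finally show ?thesis .
qed

lemma is_ess_sup_measurable: "is_ess_sup M G I A Z \<Longrightarrow> Z \<in> borel_measurable G"
  unfolding is_ess_sup_def by auto

lemma is_ess_sup_upper: "is_ess_sup M G I A Z \<Longrightarrow> y \<in> I \<Longrightarrow> AE \<omega> in M. A y \<omega> \<le> Z \<omega>"
  unfolding is_ess_sup_def by auto

lemma is_ess_sup_least:
  "is_ess_sup M G I A Z \<Longrightarrow> W \<in> borel_measurable G \<Longrightarrow>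
    (\<And>y. y \<in> I \<Longrightarrow> AE \<omega> in M. A y \<omega> \<le> W \<omega>) \<Longrightarrow> AE \<omega> in M. Z \<omega> \<le> W \<omega>"
  unfolding is_ess_sup_def by auto

lemma is_ess_inf_lower: "is_ess_inf M G I A Z \<Longrightarrow> y \<in> I \<Longrightarrow> AE \<omega> in M. Z \<omega> \<le> A y \<omega>"
  unfolding is_ess_inf_def by auto

lemma is_ess_inf_greatest:
  "is_ess_inf M G I A Z \<Longrightarrow> W \<in> borel_measurable G \<Longrightarrow>
    (\<And>y. y \<in> I \<Longrightarrow> AE \<omega> in M. W \<omega> \<le> A y \<omega>) \<Longrightarrow> AE \<omega> in M. W \<omega> \<le> Z \<omega>"
  unfolding is_ess_inf_def by auto

lemma is_ess_sup_subset_le: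
  assumes "is_ess_sup M G I A Z" "is_ess_sup M G J A Z'" "J \<subseteq> I"
  shows "AE \<omega> in M. Z' \<omega> \<le> Z \<omega>"
proof (rule is_ess_sup_least[OF assms(2) is_ess_sup_measurable[OF assms(1)]])
  fix y
  assume "y \<in> J"
  with assms(3) show "AE \<omega> in M. A y \<omega> \<le> Z \<omega>"
    by (intro is_ess_sup_upper[OF assms(1)]) auto
qed

lemma is_ess_inf_tails_ge_INF_nat:
  assumes S: "\<And>x. 0 \<le> x \<Longrightarrow> is_ess_sup M G {y\<in>I. x \<le> y} A (S x)"
    and Z: "is_ess_inf M G {0..} S Z"
  shows "AE \<omega> in M. (INF n. S (real n) \<omega>) \<le> Z \<omega>"
proof (rule is_ess_inf_greatest[OF Z])
  have "S (real n) \<in> borel_measurable G" for n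
    by (rule is_ess_sup_measurable[OF S]) simp
  then show "(\<lambda>\<omega>. INF n. S (real n) \<omega>) \<in> borel_measurable G"
    by measurable
  fix x :: real
  assume "x \<in> {0..}"
  then have "AE \<omega> in M. S (real (nat \<lceil>x\<rceil>)) \<omega> \<le> S x \<omega>"
    by (intro is_ess_sup_subset_le[OF S S]) (auto intro: order_trans[OF le_of_int_ceiling])
  then show "AE \<omega> in M. (INF n. S (real n) \<omega>) \<le> S x \<omega>"
    by eventually_elim (rule order_trans[OF INF_lower], auto)
qed

lemma rate_limits_dichotomy:
  fixes r l :: ereal and s :: "nat \<Rightarrow> ereal"
  assumes "0 \<le> r" "\<forall>n. s n < \<infinity> \<longrightarrow> r \<le> 0" "(INF n. s n) \<le> l"
  shows "(0 < r \<longrightarrow> l = \<infinity>) \<and> (l < \<infinity> \<longrightarrow> r = 0)"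
proof (intro conjI impI)
  assume "0 < r"
  then have "s n = \<infinity>" for n
    using assms(2) by (cases "s n") auto
  with assms(3) show "l = \<infinity>"
    by simp
next
  assume "l < \<infinity>"
  with assms(3) have "(INF n. s n) < \<infinity>"
    by (rule le_less_trans)
  then obtain n where "s n < \<infinity>"
    unfolding INF_less_iff by blast
  with assms(1,2) show "r = 0"
    by (auto intro: antisym)
qed

locale pricing_kernel_at_time = prob_space M for M :: "'a measure" +
  fixes F :: "real \<Rightarrow> 'a measure" and \<pi> :: "real \<Rightarrow> 'a \<Rightarrow> real" and t :: real
  assumes subalgebra_at: "subalgebra M (F t)"
    and pricing_kernel: "pricing_kernel M F \<pi>"
    and time_nonneg: "0 \<le> t"
begin

sublocale cond: finite_measure_subalgebra M "F t"
  by unfold_locales (rule subalgebra_at)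

lemma space_at: "space (F t) = space M"
  using subalgebra_at by (simp add: subalgebra_def)

lemma sets_at_imp_sets: "A \<in> sets (F t) \<Longrightarrow> A \<in> sets M"
  using subalgebra_at by (auto simp: subalgebra_def)

lemma kernel_pos: "0 \<le> s \<Longrightarrow> AE \<omega> in M. 0 < \<pi> s \<omega>"
  using pricing_kernel unfolding pricing_kernel_def by auto

lemma kernel_integrable: "0 \<le> s \<Longrightarrow> integrable M (\<pi> s)"
  using pricing_kernel unfolding pricing_kernel_def by auto

lemma bond_price_pos:
  assumes "t < T"
  shows "AE \<omega> in M. 0 < bond_price M F \<pi> t T \<omega> \<and> 0 < \<pi> t \<omega>"
proof -
  have "AE \<omega> in M. 0 < real_cond_exp M (F t) (\<pi> T) \<omega>"
    using assms time_nonneg by (intro cond.real_cond_exp_gr_c kernel_integrable kernel_pos) auto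
  with kernel_pos[OF time_nonneg] show ?thesis
    by eventually_elim (simp add: bond_price_def)
qed

lemma set_integral_kernel_pos:
  assumes "A \<in> sets M" "A \<notin> null_sets M" "0 \<le> s"
  shows "0 < (LINT \<omega>:A|M. \<pi> s \<omega>)"
proof -
  have "0 \<le> (LINT \<omega>:A|M. \<pi> s \<omega>)"
    unfolding set_lebesgue_integral_def
    using kernel_pos[OF assms(3)] by (auto intro!: integral_nonneg_AE split: split_indicator)
  moreover have "AE \<omega>\<in>A in M. 0 < \<pi> s \<omega>"
    using kernel_pos[OF assms(3)] by eventually_elim simp
  then have "(LINT \<omega>:A|M. \<pi> s \<omega>) \<noteq> 0"
    using null_if_pos_func_has_zero_int[OF kernel_integrable[OF assms(3)] assms(1)] assms(2) by blast
  ultimately show ?thesis by simp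
qed

text \<open>The tower property turns \<open>P\<^sub>t\<^sub>T \<ge> 1\<close> on \<open>A\<close> into \<open>\<bbbE>[\<pi>\<^sub>t 1\<^sub>A] \<le> \<bbbE>[\<pi>\<^sub>T 1\<^sub>A]\<close>.\<close>
lemma set_integral_kernel_le_expectation:
  assumes A: "A \<in> sets (F t)" and T: "t < T"
    and bond: "AE \<omega> in M. \<omega> \<in> A \<longrightarrow> 1 \<le> bond_price M F \<pi> t T \<omega>"
  shows "(LINT \<omega>:A|M. \<pi> t \<omega>) \<le> expectation (\<pi> T)"
proof -
  have AM: "A \<in> sets M"
    using A by (rule sets_at_imp_sets)
  have int_T: "integrable M (\<pi> T)"
    using T time_nonneg by (intro kernel_integrable) simp
  have "(LINT \<omega>:A|M. \<pi> t \<omega>) \<le> (LINT \<omega>:A|M. real_cond_exp M (F t) (\<pi> T) \<omega>)"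
  proof (rule set_integral_mono_AE)
    show "set_integrable M A (\<pi> t)"
      unfolding set_integrable_def by (rule integrable_mult_indicator[OF AM kernel_integrable[OF time_nonneg]])
    show "set_integrable M A (real_cond_exp M (F t) (\<pi> T))"
      unfolding set_integrable_def by (rule integrable_mult_indicator[OF AM cond.real_cond_exp_int(1)[OF int_T]])
    show "AE \<omega>\<in>A in M. \<pi> t \<omega> \<le> real_cond_exp M (F t) (\<pi> T) \<omega>"
      using bond bond_price_pos[OF T] by eventually_elim (auto simp: bond_price_def field_simps)
  qed
  also have "\<dots> = (LINT \<omega>:A|M. \<pi> T \<omega>)"
    using cond.real_cond_exp_intA[OF int_T A] by simp
  also have "\<dots> \<le> expectation (\<pi> T)"
    unfolding set_lebesgue_integral_def using int_T kernel_pos[of T] T time_nonneg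
    by (intro integral_mono_AE') (auto split: split_indicator elim!: eventually_mono)
  finally show ?thesis .
qed

lemma expectation_eventually_ge_imp_nonpos:
  assumes "\<forall>\<^sub>F T in at_top. m \<le> expectation (\<pi> T)"
  shows "m \<le> 0"
proof -
  have "ereal m \<le> Liminf at_top (\<lambda>T. ereal (expectation (\<pi> T)))"
    using assms by (intro Liminf_bounded) (auto elim: eventually_mono)
  then show ?thesis
    using pricing_kernel by (simp add: pricing_kernel_def)
qed

lemma ess_sup_exp_rate_nonneg:
  assumes "0 \<le> x"
    and S: "is_ess_sup M (F t) {T\<in>{t<..}. x \<le> T} (\<lambda>T \<omega>. ereal (exp_rate M F \<pi> t T \<omega>)) S"
  shows "AE \<omega> in M. 0 \<le> S \<omega>"
proof (rule ccontr)
  define A where "A = {\<omega> \<in> space M. S \<omega> < 0}"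
  have [measurable]: "S \<in> borel_measurable (F t)"
    using S by (rule is_ess_sup_measurable)
  have "{\<omega> \<in> space (F t). S \<omega> < 0} \<in> sets (F t)"
    by measurable
  then have A: "A \<in> sets (F t)"
    by (simp add: A_def space_at)
  then have AM: "A \<in> sets M"
    by (rule sets_at_imp_sets)
  assume "\<not> (AE \<omega> in M. 0 \<le> S \<omega>)"
  moreover have "AE \<omega> in M. 0 \<le> S \<omega>" if "A \<in> null_sets M"
    using AE_not_in[OF that] AE_space by eventually_elim (auto simp: A_def not_less)
  ultimately have "A \<notin> null_sets M"
    by blast
  then have pos: "0 < (LINT \<omega>:A|M. \<pi> t \<omega>)"
    by (rule set_integral_kernel_pos[OF AM _ time_nonneg])
  have "(LINT \<omega>:A|M. \<pi> t \<omega>) \<le> expectation (\<pi> T)" if T: "max x t < T" for T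
  proof (rule set_integral_kernel_le_expectation[OF A])
    show tT: "t < T" using T by simp
    have "AE \<omega> in M. ereal (exp_rate M F \<pi> t T \<omega>) \<le> S \<omega>"
      using T by (intro is_ess_sup_upper[OF S]) auto
    with bond_price_pos[OF tT]
    show "AE \<omega> in M. \<omega> \<in> A \<longrightarrow> 1 \<le> bond_price M F \<pi> t T \<omega>"
    proof eventually_elim
      case (elim \<omega>)
      show ?case
      proof
        assume "\<omega> \<in> A"
        with elim(2) have "ereal (exp_rate M F \<pi> t T \<omega>) < 0"
          unfolding A_def by (blast intro: order.strict_trans1)
        with tT have "0 < ln (bond_price M F \<pi> t T \<omega>)"
          by (simp add: exp_rate_def zero_less_divide_iff)
        with elim(1) show "1 \<le> bond_price M F \<pi> t T \<omega>"
          by (simp add: ln_gt_zero_iff)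
      qed
    qed
  qed
  then have "(LINT \<omega>:A|M. \<pi> t \<omega>) \<le> 0"
    using eventually_gt_at_top[of "max x t"]
    by (intro expectation_eventually_ge_imp_nonpos) (auto elim: eventually_mono)
  with pos show False by simp
qed

lemma ess_sup_exp_rate_le_libor_bound:
  assumes "0 < d" "x \<le> t + d"
    and SR: "is_ess_sup M (F t) {T\<in>{t<..}. t + d \<le> T} (\<lambda>T \<omega>. ereal (exp_rate M F \<pi> t T \<omega>)) SR"
    and SL: "is_ess_sup M (F t) {T\<in>{t<..}. x \<le> T} (\<lambda>T \<omega>. ereal (libor_rate M F \<pi> t T \<omega>)) SL"
  shows "AE \<omega> in M. SL \<omega> < \<infinity> \<longrightarrow>
    SR \<omega> \<le> ereal (ln (1 + max 0 (real_of_ereal (SL \<omega>))) / d + 2 / sqrt d)"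
proof -
  define W where "W \<omega> = (if SL \<omega> < \<infinity>
    then ereal (ln (1 + max 0 (real_of_ereal (SL \<omega>))) / d + 2 / sqrt d) else \<infinity>)" for \<omega>
  have [measurable]: "SL \<in> borel_measurable (F t)"
    using SL by (rule is_ess_sup_measurable)
  have "AE \<omega> in M. SR \<omega> \<le> W \<omega>"
  proof (rule is_ess_sup_least[OF SR])
    show "W \<in> borel_measurable (F t)"
      unfolding W_def by measurable
    fix T
    assume "T \<in> {T\<in>{t<..}. t + d \<le> T}"
    then have T: "t < T" "t + d \<le> T" by auto
    have "AE \<omega> in M. ereal (libor_rate M F \<pi> t T \<omega>) \<le> SL \<omega>"
      using T assms by (intro is_ess_sup_upper[OF SL]) auto
    with bond_price_pos[OF T(1)] show "AE \<omega> in M. ereal (exp_rate M F \<pi> t T \<omega>) \<le> W \<omega>"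
    proof eventually_elim
      case (elim \<omega>)
      show ?case
      proof (cases "SL \<omega> < \<infinity>")
        case True
        with elim(2) obtain a where a: "SL \<omega> = ereal a"
          by (cases "SL \<omega>") auto
        have "exp_rate M F \<pi> t T \<omega> \<le> ln (1 + max 0 a) / d + 2 / sqrt d"
          unfolding exp_rate_def
          using elim a T assms(1)
          by (intro exponential_rate_le_of_libor_rate_le) (auto simp: libor_rate_def)
        with a show ?thesis by (simp add: W_def)
      qed (simp add: W_def)
    qed
  qed
  then show ?thesis
    by eventually_elim (auto simp: W_def)
qed

lemma exp_rate_ess_limsup_nonpos:
  assumes "0 \<le> x"
    and SR: "\<And>y. 0 \<le> y \<Longrightarrow>
      is_ess_sup M (F t) {T\<in>{t<..}. y \<le> T} (\<lambda>T \<omega>. ereal (exp_rate M F \<pi> t T \<omega>)) (S y)"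
    and Rinf: "is_ess_inf M (F t) {0..} S Rinf"
    and SL: "is_ess_sup M (F t) {T\<in>{t<..}. x \<le> T} (\<lambda>T \<omega>. ereal (libor_rate M F \<pi> t T \<omega>)) SL"
  shows "AE \<omega> in M. SL \<omega> < \<infinity> \<longrightarrow> Rinf \<omega> \<le> 0"
proof -
  define d where "d n = x + 1 + real n" for n :: nat
  define bound where "bound \<omega> n = ln (1 + max 0 (real_of_ereal (SL \<omega>))) / d n + 2 / sqrt (d n)"
    for \<omega> n
  have bound_n: "AE \<omega> in M. SL \<omega> < \<infinity> \<longrightarrow> Rinf \<omega> \<le> ereal (bound \<omega> n)" for n
  proof -
    have dn: "0 < d n" "x \<le> t + d n" "0 \<le> t + d n"
      using assms(1) time_nonneg by (auto simp: d_def)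
    have "AE \<omega> in M. SL \<omega> < \<infinity> \<longrightarrow> S (t + d n) \<omega> \<le> ereal (bound \<omega> n)"
      unfolding bound_def by (rule ess_sup_exp_rate_le_libor_bound[OF dn(1,2) SR[OF dn(3)] SL])
    moreover have "AE \<omega> in M. Rinf \<omega> \<le> S (t + d n) \<omega>"
      using dn(3) by (intro is_ess_inf_lower[OF Rinf]) simp
    ultimately show ?thesis
      by eventually_elim auto
  qed
  have "AE \<omega> in M. \<forall>n. SL \<omega> < \<infinity> \<longrightarrow> Rinf \<omega> \<le> ereal (bound \<omega> n)"
    by (intro AE_all_countable[THEN iffD2] allI bound_n)
  then show ?thesis
  proof eventually_elim
    case (elim \<omega>)
    have "bound \<omega> \<longlonglongrightarrow> 0"
      unfolding bound_def d_def by real_asymp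
    then have "(\<lambda>n. ereal (bound \<omega> n)) \<longlonglongrightarrow> ereal 0"
      by (rule tendsto_ereal)
    with elim show ?case
      by (auto intro: LIMSEQ_le_const simp: zero_ereal_def)
  qed
qed

end

theorem proposition2:
  fixes M :: "'a measure" and F :: "real \<Rightarrow> 'a measure" and \<pi> :: "real \<Rightarrow> 'a \<Rightarrow> real"
    and t :: real and Rinf Linf :: "'a \<Rightarrow> ereal"
  assumes "prob_space M"
    and "usual_filtration M F"
    and "pricing_kernel M F \<pi>"
    and "0 \<le> t"
    and "is_ess_limsup M (F t) {t<..} (\<lambda>T \<omega>. ereal (exp_rate M F \<pi> t T \<omega>)) Rinf"
    and "is_ess_limsup M (F t) {t<..} (\<lambda>T \<omega>. ereal (libor_rate M F \<pi> t T \<omega>)) Linf"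
  shows "((AE \<omega> in M. Rinf \<omega> > 0) \<longrightarrow> (AE \<omega> in M. Linf \<omega> = \<infinity>)) \<and>
         ((AE \<omega> in M. Linf \<omega> < \<infinity>) \<longrightarrow> (AE \<omega> in M. Rinf \<omega> = 0))"
proof -
  have "subalgebra M (F t)"
    using assms(2) unfolding usual_filtration_def by auto
  then interpret pricing_kernel_at_time M F \<pi> t
    using assms(1,3,4) by (simp add: pricing_kernel_at_time_def pricing_kernel_at_time_axioms_def)
  obtain SR where SR: "\<And>x. 0 \<le> x \<Longrightarrow>
      is_ess_sup M (F t) {T\<in>{t<..}. x \<le> T} (\<lambda>T \<omega>. ereal (exp_rate M F \<pi> t T \<omega>)) (SR x)"
    and Rinf: "is_ess_inf M (F t) {0..} SR Rinf"
    using assms(5) unfolding is_ess_limsup_def by auto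
  obtain SL where SL: "\<And>x. 0 \<le> x \<Longrightarrow>
      is_ess_sup M (F t) {T\<in>{t<..}. x \<le> T} (\<lambda>T \<omega>. ereal (libor_rate M F \<pi> t T \<omega>)) (SL x)"
    and Linf: "is_ess_inf M (F t) {0..} SL Linf"
    using assms(6) unfolding is_ess_limsup_def by auto
  have "AE \<omega> in M. 0 \<le> Rinf \<omega>"
    by (rule is_ess_inf_greatest[OF Rinf, of "\<lambda>_. 0"]) (simp_all add: ess_sup_exp_rate_nonneg[OF _ SR])
  moreover have "AE \<omega> in M. \<forall>n::nat. SL (real n) \<omega> < \<infinity> \<longrightarrow> Rinf \<omega> \<le> 0"
    by (intro AE_all_countable[THEN iffD2] allI exp_rate_ess_limsup_nonpos[OF _ SR Rinf SL]) simp_all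
  moreover have "AE \<omega> in M. (INF n. SL (real n) \<omega>) \<le> Linf \<omega>"
    by (rule is_ess_inf_tails_ge_INF_nat[OF SL Linf])
  ultimately have "AE \<omega> in M. (0 < Rinf \<omega> \<longrightarrow> Linf \<omega> = \<infinity>) \<and> (Linf \<omega> < \<infinity> \<longrightarrow> Rinf \<omega> = 0)"
    by eventually_elim (rule rate_limits_dichotomy)
  then show ?thesis
    by (auto elim: AE_mp)
qed

end
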